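(* Let $K$ be a field of characteristic $0$, let $W\le S_d$ be a permutation group and let $\chi$ be a one-dimensional character of $W$. For every $n\in\mathbb N_0$, $$g_n(\chi;x_0,\dots,x_n)=Z(\chi;p_1,\dots,p_d),$$ where $p_s=x_0^s+\cdots+x_n^s$ are the power sums in the $n+1$ variables $x_0,\dots,x_n$.
   Context: A one-dimensional character of $W$ is a homomorphism $W\to K^\times$. $\mathbb N_0=\{0,1,2,\dots\}$, $[0,n]=\{0,1,\dots,n\}$. $W$ acts on $[0,n]^d$ by $\sigma(i_1,\dots,i_d)=(i_{\sigma^{-1}(1)},\dots,i_{\sigma^{-1}(d)})$. $J(n,d,\chi)$ is the set of those $j\in[0,n]^d$ that are lexicographically minimal in their $W$-orbit and satisfy $\chi(\sigma)=1$ for all $\sigma$ in the stabilizer $W_j$. $g_n(\chi;x_0,\dots,x_n)=\sum_{j\in J(n,d,\chi)}x_{j_1}\cdots x_{j_d}$. $Z(\chi;p_1,\dots,p_d)=|W|^{-1}\sum_{\sigma\in W}\chi(\sigma)p_1^{c_1(\sigma)}\cdots p_d^{c_d(\sigma)}$, where $c_s(\sigma)$ is the number of cycles of length $s$ of $\sigma$. *)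

theory Defs
  imports "HOL-Combinatorics.Permutations" "HOL-Combinatorics.Orbits"
begin

definition perm_group :: "nat \<Rightarrow> (nat \<Rightarrow> nat) set \<Rightarrow> bool" where
  "perm_group d W \<longleftrightarrow> (\<forall>\<sigma>\<in>W. \<sigma> permutes {1..d}) \<and> id \<in> W \<and>
     (\<forall>\<sigma>\<in>W. \<forall>\<tau>\<in>W. \<sigma> \<circ> \<tau> \<in> W) \<and> (\<forall>\<sigma>\<in>W. inv \<sigma> \<in> W)"

definition one_dim_char :: "(nat \<Rightarrow> nat) set \<Rightarrow> ((nat \<Rightarrow> nat) \<Rightarrow> 'a::field) \<Rightarrow> bool" where
  "one_dim_char W \<chi> \<longleftrightarrow> (\<forall>\<sigma>\<in>W. \<chi> \<sigma> \<noteq> 0) \<and>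
     (\<forall>\<sigma>\<in>W. \<forall>\<tau>\<in>W. \<chi> (\<sigma> \<circ> \<tau>) = \<chi> \<sigma> * \<chi> \<tau>)"

text \<open>Tuples (i_1,...,i_d) in [0,n]^d are lists of length d; the k-th entry i_k is j ! (k-1).\<close>
definition tuples :: "nat \<Rightarrow> nat \<Rightarrow> nat list set" where
  "tuples n d = {j. length j = d \<and> (\<forall>k<d. j ! k \<le> n)}"

definition act :: "(nat \<Rightarrow> nat) \<Rightarrow> nat list \<Rightarrow> nat list" where
  "act \<sigma> j = map (\<lambda>k. j ! (inv \<sigma> k - 1)) [1..<length j + 1]"

definition lex_le :: "nat list \<Rightarrow> nat list \<Rightarrow> bool" where
  "lex_le xs ys \<longleftrightarrow> xs = ys \<or> (xs, ys) \<in> lexord {(a, b). a < b}"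

definition stabilizer :: "(nat \<Rightarrow> nat) set \<Rightarrow> nat list \<Rightarrow> (nat \<Rightarrow> nat) set" where
  "stabilizer W j = {\<sigma>\<in>W. act \<sigma> j = j}"

definition J_set :: "nat \<Rightarrow> nat \<Rightarrow> (nat \<Rightarrow> nat) set \<Rightarrow> ((nat \<Rightarrow> nat) \<Rightarrow> 'a::field) \<Rightarrow> nat list set" where
  "J_set n d W \<chi> = {j\<in>tuples n d. (\<forall>\<sigma>\<in>W. lex_le j (act \<sigma> j)) \<and>
                                   (\<forall>\<sigma>\<in>stabilizer W j. \<chi> \<sigma> = 1)}"

definition g_poly :: "nat \<Rightarrow> nat \<Rightarrow> (nat \<Rightarrow> nat) set \<Rightarrow> ((nat \<Rightarrow> nat) \<Rightarrow> 'a::field) \<Rightarrow> (nat \<Rightarrow> 'a) \<Rightarrow> 'a" where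
  "g_poly n d W \<chi> x = (\<Sum>j\<in>J_set n d W \<chi>. \<Prod>k<d. x (j ! k))"

definition cycle_count :: "nat \<Rightarrow> (nat \<Rightarrow> nat) \<Rightarrow> nat \<Rightarrow> nat" where
  "cycle_count d \<sigma> s = card {orbit \<sigma> a | a. a \<in> {1..d} \<and> card (orbit \<sigma> a) = s}"

definition Z_poly :: "nat \<Rightarrow> (nat \<Rightarrow> nat) set \<Rightarrow> ((nat \<Rightarrow> nat) \<Rightarrow> 'a::field) \<Rightarrow> (nat \<Rightarrow> 'a) \<Rightarrow> 'a" where
  "Z_poly d W \<chi> p = (1 / of_nat (card W)) *
     (\<Sum>\<sigma>\<in>W. \<chi> \<sigma> * (\<Prod>s\<in>{1..d}. p s ^ cycle_count d \<sigma> s))"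

end

theory Submission
  imports Defs "HOL-Library.List_Lexorder"
begin

text \<open>
  A tuple is fixed by \<sigma> iff it is constant on the cycles of \<sigma>, so expanding the power sums
  gives \<open>p\<^sub>1\<^bsup>c\<^sub>1(\<sigma>)\<^esup> \<cdots> p\<^sub>d\<^bsup>c\<^sub>d(\<sigma>)\<^esup> = \<Sum> x\<^sup>j\<close>
  over the tuples \<open>j\<close> fixed by \<sigma>. Exchanging the summations,
  \<open>Z = |W|\<^sup>-\<^sup>1 \<Sum>\<^sub>j x\<^sup>j \<Sum>\<^bsub>\<sigma>\<in>W\<^sub>j\<^esub> \<chi>(\<sigma>)\<close>, and the inner sum is \<open>|W\<^sub>j|\<close> if \<chi> is trivial
  on the stabiliser \<open>W\<^sub>j\<close> and 0 otherwise. All terms are constant on orbits, so by the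
  orbit-stabiliser theorem each orbit contributes \<open>|W| x\<^sup>j\<close> for its lexicographically least
  element \<open>j\<close> when \<chi> is trivial on \<open>W\<^sub>j\<close>, and nothing otherwise: this is the sum defining \<open>g\<^sub>n\<close>.
\<close>

lemma length_act [simp]: "length (act \<sigma> j) = length j"
  unfolding act_def by (simp del: upt_Suc)

lemma nth_act: "k < length j \<Longrightarrow> act \<sigma> j ! k = j ! (inv \<sigma> (Suc k) - 1)"
  unfolding act_def by (simp del: upt_Suc)

lemma permutes_inv_Suc_mem:
  assumes "\<sigma> permutes {1..d}" "k < d"
  shows "inv \<sigma> (Suc k) \<in> {1..d}"
  using permutes_in_image[OF permutes_inv[OF assms(1)]] assms(2) by simp

lemma nth_act_apply:
  assumes "\<sigma> permutes {1..d}" "length j = d" "a \<in> {1..d}"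
  shows "act \<sigma> j ! (\<sigma> a - 1) = j ! (a - 1)"
proof -
  have "\<sigma> a \<in> {1..d}" using permutes_in_image[OF assms(1)] assms(3) by blast
  then have "\<sigma> a - 1 < length j" "Suc (\<sigma> a - 1) = \<sigma> a" using assms(2) by auto
  then show ?thesis by (simp add: nth_act permutes_inverses(2)[OF assms(1)])
qed

lemma act_id [simp]: "act id j = j"
  by (rule nth_equalityI) (auto simp: nth_act)

lemma act_comp:
  assumes "\<sigma> permutes {1..d}" "\<tau> permutes {1..d}" "length j = d"
  shows "act \<sigma> (act \<tau> j) = act (\<sigma> \<circ> \<tau>) j"
proof (rule nth_equalityI)
  fix k assume "k < length (act \<sigma> (act \<tau> j))"
  then have k: "k < d" using assms(3) by simp
  have "inv \<sigma> (Suc k) \<in> {1..d}" using permutes_inv_Suc_mem[OF assms(1) k] .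
  moreover have "inv (\<sigma> \<circ> \<tau>) = inv \<tau> \<circ> inv \<sigma>"
    using o_inv_distrib permutes_bij assms(1,2) by blast
  ultimately show "act \<sigma> (act \<tau> j) ! k = act (\<sigma> \<circ> \<tau>) j ! k"
    using k assms(3) by (auto simp: nth_act)
qed simp

lemma act_in_tuples:
  assumes "\<sigma> permutes {1..d}" "j \<in> tuples n d"
  shows "act \<sigma> j \<in> tuples n d"
proof -
  have "inv \<sigma> (Suc k) - 1 < d" if "k < d" for k
    using permutes_inv_Suc_mem[OF assms(1) that] by auto
  with assms(2) show ?thesis unfolding tuples_def by (auto simp: nth_act)
qed

lemma prod_lessThan_shift:
  fixes f :: "nat \<Rightarrow> 'a::comm_monoid_mult"
  shows "(\<Prod>k<d. f k) = (\<Prod>a\<in>{1..d}. f (a - 1))"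
proof -
  have "{1..d} = Suc ` {..<d}" by (simp add: image_Suc_lessThan)
  then show ?thesis by (simp add: prod.reindex)
qed

lemma prod_nth_act:
  fixes x :: "nat \<Rightarrow> 'a::comm_monoid_mult"
  assumes "\<sigma> permutes {1..d}" "length j = d"
  shows "(\<Prod>k<d. x (act \<sigma> j ! k)) = (\<Prod>k<d. x (j ! k))"
proof -
  have "(\<Prod>k<d. x (act \<sigma> j ! k)) = (\<Prod>a\<in>{1..d}. x (act \<sigma> j ! (\<sigma> a - 1)))"
    unfolding prod_lessThan_shift using prod.permute[OF assms(1)] by (simp add: comp_def)
  also have "\<dots> = (\<Prod>a\<in>{1..d}. x (j ! (a - 1)))"
    using nth_act_apply[OF assms] by simp
  finally show ?thesis unfolding prod_lessThan_shift .
qed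

definition perm_cycles :: "(nat \<Rightarrow> nat) \<Rightarrow> nat \<Rightarrow> nat set set" where
  "perm_cycles \<sigma> d = orbit \<sigma> ` {1..d}"

lemma perm_cycle_eq:
  assumes "\<sigma> permutes {1..d}" "c \<in> perm_cycles \<sigma> d"
  shows "{a \<in> {1..d}. orbit \<sigma> a = c} = c"
proof -
  have perm: "permutation \<sigma>" using assms(1) permutation_permutes by blast
  obtain a where a: "a \<in> {1..d}" "c = orbit \<sigma> a"
    using assms(2) unfolding perm_cycles_def by blast
  have "c \<subseteq> {1..d}" using permutes_orbit_subset[OF assms(1) a(1)] a(2) by simp
  then show ?thesis
    using a(2) orbit_cyclic_eq3[OF cyclic_on_orbit'[OF perm]] permutation_self_in_orbit[OF perm] by blast
qed

lemma finite_perm_cycles: "finite (perm_cycles \<sigma> d)"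
  unfolding perm_cycles_def by simp

lemma card_perm_cycle:
  assumes "\<sigma> permutes {1..d}" "c \<in> perm_cycles \<sigma> d"
  shows "card c \<in> {1..d}"
proof -
  have "c \<subseteq> {1..d}" "c \<noteq> {}"
    using perm_cycle_eq[OF assms] assms(2) unfolding perm_cycles_def by auto
  then show ?thesis
    using card_mono[of "{1..d}" c] finite_subset[of c "{1..d}"] by (auto simp: Suc_le_eq)
qed

lemma prod_cycle_count:
  fixes P :: "nat \<Rightarrow> 'a::comm_monoid_mult"
  assumes "\<sigma> permutes {1..d}"
  shows "(\<Prod>s\<in>{1..d}. P s ^ cycle_count d \<sigma> s) = (\<Prod>c\<in>perm_cycles \<sigma> d. P (card c))"
proof -
  have "cycle_count d \<sigma> s = card {c \<in> perm_cycles \<sigma> d. card c = s}" for s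
    unfolding cycle_count_def perm_cycles_def by (rule arg_cong[where f = card]) auto
  then have "(\<Prod>s\<in>{1..d}. P s ^ cycle_count d \<sigma> s) =
      (\<Prod>s\<in>{1..d}. \<Prod>c\<in>{c \<in> perm_cycles \<sigma> d. card c = s}. P (card c))"
    by simp
  also have "\<dots> = (\<Prod>c\<in>perm_cycles \<sigma> d. P (card c))"
    using card_perm_cycle[OF assms] finite_perm_cycles by (intro prod.group) auto
  finally show ?thesis .
qed

lemma act_fixed_iff:
  assumes "\<sigma> permutes {1..d}" "length j = d"
  shows "act \<sigma> j = j \<longleftrightarrow> (\<forall>a\<in>{1..d}. j ! (\<sigma> a - 1) = j ! (a - 1))"
proof
  assume "act \<sigma> j = j"
  then show "\<forall>a\<in>{1..d}. j ! (\<sigma> a - 1) = j ! (a - 1)"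
    using nth_act_apply[OF assms] by metis
next
  assume fixed: "\<forall>a\<in>{1..d}. j ! (\<sigma> a - 1) = j ! (a - 1)"
  show "act \<sigma> j = j"
  proof (rule nth_equalityI)
    fix k assume "k < length (act \<sigma> j)"
    then have k: "k < d" using assms(2) by simp
    have "j ! (\<sigma> (inv \<sigma> (Suc k)) - 1) = j ! (inv \<sigma> (Suc k) - 1)"
      using fixed permutes_inv_Suc_mem[OF assms(1) k] by blast
    then show "act \<sigma> j ! k = j ! k"
      using k assms(2) by (simp add: nth_act permutes_inverses(1)[OF assms(1)])
  qed simp
qed

lemma fixed_tuple_constant_on_orbit:
  assumes "\<sigma> permutes {1..d}" "length j = d" "act \<sigma> j = j" "a \<in> {1..d}" "b \<in> orbit \<sigma> a"
  shows "j ! (b - 1) = j ! (a - 1)"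
  using assms(5)
proof induction
  case base
  then show ?case using assms(1-4) by (simp add: act_fixed_iff)
next
  case (step y)
  have "y \<in> {1..d}" using permutes_orbit_subset[OF assms(1,4)] step.hyps(1) by blast
  then show ?case using step.IH assms(1-3) by (simp add: act_fixed_iff)
qed

definition cycle_tuple :: "(nat \<Rightarrow> nat) \<Rightarrow> nat \<Rightarrow> (nat set \<Rightarrow> nat) \<Rightarrow> nat list" where
  "cycle_tuple \<sigma> d g = map (\<lambda>k. g (orbit \<sigma> (Suc k))) [0..<d]"

lemma length_cycle_tuple [simp]: "length (cycle_tuple \<sigma> d g) = d"
  unfolding cycle_tuple_def by simp

lemma nth_cycle_tuple: "a \<in> {1..d} \<Longrightarrow> cycle_tuple \<sigma> d g ! (a - 1) = g (orbit \<sigma> a)"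
  unfolding cycle_tuple_def by auto

lemma inj_on_cycle_tuple: "inj_on (cycle_tuple \<sigma> d) (perm_cycles \<sigma> d \<rightarrow>\<^sub>E X)"
proof (rule inj_onI)
  fix g h assume g: "g \<in> perm_cycles \<sigma> d \<rightarrow>\<^sub>E X" and h: "h \<in> perm_cycles \<sigma> d \<rightarrow>\<^sub>E X"
    and eq: "cycle_tuple \<sigma> d g = cycle_tuple \<sigma> d h"
  show "g = h"
  proof (rule PiE_ext[OF g h])
    fix c assume "c \<in> perm_cycles \<sigma> d"
    then obtain a where "a \<in> {1..d}" "c = orbit \<sigma> a" unfolding perm_cycles_def by blast
    then show "g c = h c" using eq nth_cycle_tuple by metis
  qed
qed

lemma fixed_tuples_eq_image_cycle_tuple:
  assumes "\<sigma> permutes {1..d}"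
  shows "{j \<in> tuples n d. act \<sigma> j = j} = cycle_tuple \<sigma> d ` (perm_cycles \<sigma> d \<rightarrow>\<^sub>E {..n})"
proof (intro equalityI subsetI)
  fix j assume "j \<in> {j \<in> tuples n d. act \<sigma> j = j}"
  then have j: "length j = d" "\<forall>k<d. j ! k \<le> n" "act \<sigma> j = j" unfolding tuples_def by auto
  define g where "g = (\<lambda>c\<in>perm_cycles \<sigma> d. j ! (Min c - 1))"
  have Min_cycle: "Min c \<in> c" "Min c \<in> {1..d}" if "c \<in> perm_cycles \<sigma> d" for c
  proof -
    have "c \<subseteq> {1..d}" "c \<noteq> {}"
      using perm_cycle_eq[OF assms that] that unfolding perm_cycles_def by auto
    then have "finite c" using finite_subset by blast
    show "Min c \<in> c" using Min_in[OF \<open>finite c\<close> \<open>c \<noteq> {}\<close>] .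
    then show "Min c \<in> {1..d}" using \<open>c \<subseteq> {1..d}\<close> by blast
  qed
  have "g \<in> perm_cycles \<sigma> d \<rightarrow>\<^sub>E {..n}"
    using Min_cycle(2) j(2) unfolding g_def by fastforce
  moreover have "j = cycle_tuple \<sigma> d g"
  proof (rule nth_equalityI)
    fix k assume "k < length j"
    then have a: "Suc k \<in> {1..d}" and c: "orbit \<sigma> (Suc k) \<in> perm_cycles \<sigma> d"
      using j(1) unfolding perm_cycles_def by auto
    have "j ! (Min (orbit \<sigma> (Suc k)) - 1) = j ! k"
      using fixed_tuple_constant_on_orbit[OF assms j(1,3) a] Min_cycle(1)[OF c] by simp
    then show "j ! k = cycle_tuple \<sigma> d g ! k"
      using nth_cycle_tuple[OF a] c unfolding g_def by simp
  qed (simp add: j(1))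
  ultimately show "j \<in> cycle_tuple \<sigma> d ` (perm_cycles \<sigma> d \<rightarrow>\<^sub>E {..n})" by blast
next
  fix j assume "j \<in> cycle_tuple \<sigma> d ` (perm_cycles \<sigma> d \<rightarrow>\<^sub>E {..n})"
  then obtain g where g: "g \<in> perm_cycles \<sigma> d \<rightarrow>\<^sub>E {..n}" and j: "j = cycle_tuple \<sigma> d g" by blast
  have perm: "permutation \<sigma>" using assms permutation_permutes by blast
  have "j \<in> tuples n d"
    using g unfolding j tuples_def cycle_tuple_def perm_cycles_def by auto
  moreover have "act \<sigma> j = j"
    using nth_cycle_tuple permutes_in_image[OF assms] permutation_orbit_step[OF perm]
    unfolding j by (subst act_fixed_iff[OF assms]) auto
  ultimately show "j \<in> {j \<in> tuples n d. act \<sigma> j = j}" by blast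
qed

lemma prod_cycle_tuple:
  fixes x :: "nat \<Rightarrow> 'a::comm_monoid_mult"
  assumes "\<sigma> permutes {1..d}"
  shows "(\<Prod>k<d. x (cycle_tuple \<sigma> d g ! k)) = (\<Prod>c\<in>perm_cycles \<sigma> d. x (g c) ^ card c)"
proof -
  have "(\<Prod>k<d. x (cycle_tuple \<sigma> d g ! k)) = (\<Prod>a\<in>{1..d}. x (g (orbit \<sigma> a)))"
    unfolding prod_lessThan_shift by (intro prod.cong refl) (simp only: nth_cycle_tuple)
  also have "\<dots> = (\<Prod>c\<in>perm_cycles \<sigma> d. \<Prod>a\<in>{a \<in> {1..d}. orbit \<sigma> a = c}. x (g (orbit \<sigma> a)))"
    by (rule prod.group[symmetric]) (auto simp: perm_cycles_def)
  also have "\<dots> = (\<Prod>c\<in>perm_cycles \<sigma> d. \<Prod>a\<in>{a \<in> {1..d}. orbit \<sigma> a = c}. x (g c))"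
    by (intro prod.cong refl) simp
  also have "\<dots> = (\<Prod>c\<in>perm_cycles \<sigma> d. x (g c) ^ card c)"
    using perm_cycle_eq[OF assms] by simp
  finally show ?thesis .
qed

lemma prod_power_sums_cycle_count:
  fixes x :: "nat \<Rightarrow> 'a::comm_semiring_1"
  assumes "\<sigma> permutes {1..d}"
  shows "(\<Prod>s\<in>{1..d}. (\<Sum>i\<le>n. x i ^ s) ^ cycle_count d \<sigma> s) =
    (\<Sum>j\<in>{j \<in> tuples n d. act \<sigma> j = j}. \<Prod>k<d. x (j ! k))"
proof -
  have "(\<Prod>s\<in>{1..d}. (\<Sum>i\<le>n. x i ^ s) ^ cycle_count d \<sigma> s) =
      (\<Prod>c\<in>perm_cycles \<sigma> d. \<Sum>i\<le>n. x i ^ card c)"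
    by (rule prod_cycle_count[OF assms])
  also have "\<dots> = (\<Sum>g\<in>perm_cycles \<sigma> d \<rightarrow>\<^sub>E {..n}. \<Prod>c\<in>perm_cycles \<sigma> d. x (g c) ^ card c)"
    by (rule prod_sum_PiE) (simp_all add: finite_perm_cycles)
  also have "\<dots> = (\<Sum>g\<in>perm_cycles \<sigma> d \<rightarrow>\<^sub>E {..n}. \<Prod>k<d. x (cycle_tuple \<sigma> d g ! k))"
    by (simp add: prod_cycle_tuple[OF assms])
  also have "\<dots> = (\<Sum>j\<in>{j \<in> tuples n d. act \<sigma> j = j}. \<Prod>k<d. x (j ! k))"
    unfolding fixed_tuples_eq_image_cycle_tuple[OF assms] by (simp add: sum.reindex inj_on_cycle_tuple)
  finally show ?thesis .
qed

lemma finite_tuples: "finite (tuples n d)"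
proof (rule finite_subset)
  show "tuples n d \<subseteq> {xs. set xs \<subseteq> {..n} \<and> length xs = d}"
    unfolding tuples_def by (auto simp: in_set_conv_nth)
qed (rule finite_lists_length_eq, simp)

lemma tuples_length: "j \<in> tuples n d \<Longrightarrow> length j = d"
  unfolding tuples_def by simp

definition tuple_orbit :: "(nat \<Rightarrow> nat) set \<Rightarrow> nat list \<Rightarrow> nat list set" where
  "tuple_orbit W j = (\<lambda>\<sigma>. act \<sigma> j) ` W"

definition orbit_least :: "(nat \<Rightarrow> nat) set \<Rightarrow> nat list \<Rightarrow> bool" where
  "orbit_least W j \<longleftrightarrow> (\<forall>\<sigma>\<in>W. j \<le> act \<sigma> j)"

lemma J_set_eq:
  "J_set n d W \<chi> = {j \<in> tuples n d. orbit_least W j \<and> (\<forall>\<sigma>\<in>stabilizer W j. \<chi> \<sigma> = 1)}"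
  unfolding J_set_def orbit_least_def lex_le_def by (auto simp: list_le_def list_less_def)

lemma stabilizer_subset: "stabilizer W j \<subseteq> W"
  unfolding stabilizer_def by blast

lemma one_dim_char_subset: "one_dim_char W \<chi> \<Longrightarrow> H \<subseteq> W \<Longrightarrow> one_dim_char H \<chi>"
  unfolding one_dim_char_def by blast

locale permutation_group =
  fixes d :: nat and W :: "(nat \<Rightarrow> nat) set"
  assumes perm_group: "perm_group d W"
begin

lemma mem_permutes: "\<sigma> \<in> W \<Longrightarrow> \<sigma> permutes {1..d}"
  using perm_group unfolding perm_group_def by blast

lemma id_mem: "id \<in> W"
  using perm_group unfolding perm_group_def by blast

lemma comp_mem: "\<sigma> \<in> W \<Longrightarrow> \<tau> \<in> W \<Longrightarrow> \<sigma> \<circ> \<tau> \<in> W"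
  using perm_group unfolding perm_group_def by blast

lemma inv_mem: "\<sigma> \<in> W \<Longrightarrow> inv \<sigma> \<in> W"
  using perm_group unfolding perm_group_def by blast

lemma finite_group: "finite W"
  by (rule finite_subset[OF _ finite_permutations[OF finite_atLeastAtMost]]) (use mem_permutes in blast)

lemma card_group_pos: "card W > 0"
  using finite_group id_mem by (auto simp: card_gt_0_iff)

lemma inv_comp_cancel: "\<sigma> \<in> W \<Longrightarrow> inv \<sigma> \<circ> \<sigma> = id"
  and comp_inv_cancel: "\<sigma> \<in> W \<Longrightarrow> \<sigma> \<circ> inv \<sigma> = id"
  using mem_permutes permutes_inv_o by blast+

lemma bij_betw_comp_left:
  assumes "\<tau> \<in> W"
  shows "bij_betw ((\<circ>) \<tau>) W W"
proof (rule bij_betw_byWitness[where f' = "(\<circ>) (inv \<tau>)"])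
  show "\<forall>\<sigma>\<in>W. inv \<tau> \<circ> (\<tau> \<circ> \<sigma>) = \<sigma>" by (simp add: o_assoc inv_comp_cancel[OF assms])
  show "\<forall>\<sigma>\<in>W. \<tau> \<circ> (inv \<tau> \<circ> \<sigma>) = \<sigma>" by (simp add: o_assoc comp_inv_cancel[OF assms])
  show "(\<circ>) \<tau> ` W \<subseteq> W" "(\<circ>) (inv \<tau>) ` W \<subseteq> W"
    using comp_mem inv_mem assms by blast+
qed

lemma char_id:
  assumes "one_dim_char W \<chi>"
  shows "\<chi> id = 1"
proof -
  have "\<chi> (id \<circ> id) = \<chi> id * \<chi> id" "\<chi> id \<noteq> 0"
    using assms id_mem unfolding one_dim_char_def by blast+
  then show ?thesis by simp
qed

lemma char_conj:
  assumes "one_dim_char W \<chi>" "\<sigma> \<in> W" "\<tau> \<in> W"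
  shows "\<chi> (\<tau> \<circ> \<sigma> \<circ> inv \<tau>) = \<chi> \<sigma>"
proof -
  have "\<chi> (\<tau> \<circ> \<sigma> \<circ> inv \<tau>) = \<chi> \<sigma> * \<chi> (\<tau> \<circ> inv \<tau>)"
    using assms comp_mem inv_mem unfolding one_dim_char_def by (simp add: mult_ac)
  then show ?thesis using char_id[OF assms(1)] comp_inv_cancel[OF assms(3)] by simp
qed

lemma sum_char:
  assumes "one_dim_char W \<chi>"
  shows "(\<Sum>\<sigma>\<in>W. \<chi> \<sigma>) = (if \<forall>\<sigma>\<in>W. \<chi> \<sigma> = 1 then of_nat (card W) else 0)"
proof (cases "\<forall>\<sigma>\<in>W. \<chi> \<sigma> = 1")
  case False
  then obtain \<tau> where \<tau>: "\<tau> \<in> W" "\<chi> \<tau> \<noteq> 1" by blast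
  have "(\<Sum>\<sigma>\<in>W. \<chi> \<sigma>) = (\<Sum>\<sigma>\<in>W. \<chi> (\<tau> \<circ> \<sigma>))"
    by (simp add: sum.reindex_bij_betw[OF bij_betw_comp_left[OF \<tau>(1)]])
  also have "\<dots> = \<chi> \<tau> * (\<Sum>\<sigma>\<in>W. \<chi> \<sigma>)"
    using assms \<tau>(1) unfolding one_dim_char_def by (simp add: sum_distrib_left)
  finally have "(\<chi> \<tau> - 1) * (\<Sum>\<sigma>\<in>W. \<chi> \<sigma>) = 0" by (simp add: algebra_simps)
  then have "(\<Sum>\<sigma>\<in>W. \<chi> \<sigma>) = 0" using \<tau>(2) by simp
  then show ?thesis using False by auto
qed simp

lemma act_inv_act: "\<sigma> \<in> W \<Longrightarrow> length j = d \<Longrightarrow> act (inv \<sigma>) (act \<sigma> j) = j"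
  using act_comp[OF mem_permutes[OF inv_mem] mem_permutes] inv_comp_cancel by simp

lemma stabilizer_comp_mem:
  "\<sigma> \<in> stabilizer W j \<Longrightarrow> \<tau> \<in> stabilizer W j \<Longrightarrow> length j = d \<Longrightarrow> \<sigma> \<circ> \<tau> \<in> stabilizer W j"
  unfolding stabilizer_def using act_comp[OF mem_permutes mem_permutes] comp_mem by force

lemma perm_group_stabilizer:
  assumes "length j = d"
  shows "perm_group d (stabilizer W j)"
proof -
  have "inv \<sigma> \<in> stabilizer W j" if "\<sigma> \<in> stabilizer W j" for \<sigma>
    using that act_inv_act[of \<sigma> j] assms inv_mem unfolding stabilizer_def by auto
  moreover have "\<sigma> permutes {1..d}" if "\<sigma> \<in> stabilizer W j" for \<sigma>
    using that mem_permutes unfolding stabilizer_def by blast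
  ultimately show ?thesis unfolding perm_group_def using stabilizer_comp_mem[OF _ _ assms]
    by (auto simp: stabilizer_def id_mem)
qed

lemma sum_char_stabilizer:
  assumes "one_dim_char W \<chi>" "length j = d"
  shows "(\<Sum>\<sigma>\<in>stabilizer W j. \<chi> \<sigma>) =
    (if \<forall>\<sigma>\<in>stabilizer W j. \<chi> \<sigma> = 1 then of_nat (card (stabilizer W j)) else 0)"
proof -
  interpret stab: permutation_group d "stabilizer W j"
    by unfold_locales (rule perm_group_stabilizer[OF assms(2)])
  show ?thesis
    by (rule stab.sum_char, rule one_dim_char_subset[OF assms(1) stabilizer_subset])
qed

lemma conj_mem_stabilizer_act:
  assumes "\<sigma> \<in> stabilizer W j" "\<tau> \<in> W" "length j = d"
  shows "\<tau> \<circ> \<sigma> \<circ> inv \<tau> \<in> stabilizer W (act \<tau> j)"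
proof -
  have \<sigma>: "\<sigma> \<in> W" "act \<sigma> j = j" using assms(1) unfolding stabilizer_def by auto
  have "act (\<tau> \<circ> \<sigma> \<circ> inv \<tau>) (act \<tau> j) = act (\<tau> \<circ> \<sigma>) (act (inv \<tau>) (act \<tau> j))"
    using act_comp[OF mem_permutes[OF comp_mem[OF assms(2) \<sigma>(1)]] mem_permutes[OF inv_mem[OF assms(2)]]]
      assms(3) by simp
  also have "\<dots> = act (\<tau> \<circ> \<sigma>) j" using act_inv_act[OF assms(2,3)] by simp
  also have "\<dots> = act \<tau> j"
    using act_comp[OF mem_permutes[OF assms(2)] mem_permutes[OF \<sigma>(1)] assms(3)] \<sigma>(2) by simp
  finally show ?thesis using \<sigma>(1) assms(2) by (simp add: stabilizer_def comp_mem inv_mem)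
qed

lemma char_trivial_on_stabilizer_act:
  assumes "one_dim_char W \<chi>" "\<tau> \<in> W" "length j = d"
  shows "(\<forall>\<sigma>\<in>stabilizer W (act \<tau> j). \<chi> \<sigma> = 1) \<longleftrightarrow> (\<forall>\<sigma>\<in>stabilizer W j. \<chi> \<sigma> = 1)"
proof
  assume trivial: "\<forall>\<sigma>\<in>stabilizer W (act \<tau> j). \<chi> \<sigma> = 1"
  show "\<forall>\<sigma>\<in>stabilizer W j. \<chi> \<sigma> = 1"
  proof
    fix \<sigma> assume \<sigma>: "\<sigma> \<in> stabilizer W j"
    then have "\<chi> (\<tau> \<circ> \<sigma> \<circ> inv \<tau>) = 1"
      using trivial conj_mem_stabilizer_act[OF \<sigma> assms(2,3)] by blast
    then show "\<chi> \<sigma> = 1"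
      using char_conj[OF assms(1) _ assms(2)] \<sigma> unfolding stabilizer_def by simp
  qed
next
  assume trivial: "\<forall>\<sigma>\<in>stabilizer W j. \<chi> \<sigma> = 1"
  show "\<forall>\<sigma>\<in>stabilizer W (act \<tau> j). \<chi> \<sigma> = 1"
  proof
    fix \<sigma> assume \<sigma>: "\<sigma> \<in> stabilizer W (act \<tau> j)"
    have "inv \<tau> \<circ> \<sigma> \<circ> inv (inv \<tau>) \<in> stabilizer W (act (inv \<tau>) (act \<tau> j))"
      using conj_mem_stabilizer_act[OF \<sigma> inv_mem[OF assms(2)]] assms(3) by simp
    then have "\<chi> (inv \<tau> \<circ> \<sigma> \<circ> inv (inv \<tau>)) = 1"
      using trivial act_inv_act[OF assms(2,3)] by simp
    then show "\<chi> \<sigma> = 1"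
      using char_conj[OF assms(1) _ inv_mem[OF assms(2)]] \<sigma> unfolding stabilizer_def by simp
  qed
qed

lemma finite_tuple_orbit: "finite (tuple_orbit W j)"
  unfolding tuple_orbit_def using finite_group by simp

lemma act_mem_tuple_orbit: "\<sigma> \<in> W \<Longrightarrow> act \<sigma> j \<in> tuple_orbit W j"
  unfolding tuple_orbit_def by blast

lemma self_mem_tuple_orbit: "j \<in> tuple_orbit W j"
  using act_mem_tuple_orbit[OF id_mem] by simp

lemma tuple_orbit_act_subset:
  assumes "length j = d" "\<tau> \<in> W"
  shows "tuple_orbit W (act \<tau> j) \<subseteq> tuple_orbit W j"
  unfolding tuple_orbit_def
  using act_comp[OF mem_permutes mem_permutes[OF assms(2)] assms(1)] comp_mem[OF _ assms(2)] by auto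

lemma tuple_orbit_act:
  assumes "length j = d" "\<tau> \<in> W"
  shows "tuple_orbit W (act \<tau> j) = tuple_orbit W j"
proof
  show "tuple_orbit W (act \<tau> j) \<subseteq> tuple_orbit W j" by (rule tuple_orbit_act_subset[OF assms])
  have "tuple_orbit W j = tuple_orbit W (act (inv \<tau>) (act \<tau> j))"
    using act_inv_act[OF assms(2,1)] by simp
  also have "\<dots> \<subseteq> tuple_orbit W (act \<tau> j)"
    using tuple_orbit_act_subset[OF _ inv_mem[OF assms(2)]] assms(1) by simp
  finally show "tuple_orbit W j \<subseteq> tuple_orbit W (act \<tau> j)" .
qed

lemma tuple_orbit_eq:
  assumes "length j = d" "k \<in> tuple_orbit W j"
  shows "tuple_orbit W k = tuple_orbit W j"
  using assms tuple_orbit_act unfolding tuple_orbit_def by blast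

lemma act_fibre_eq_coset:
  assumes "length j = d" "\<tau> \<in> W"
  shows "{\<sigma> \<in> W. act \<sigma> j = act \<tau> j} = (\<circ>) \<tau> ` stabilizer W j"
proof (intro equalityI subsetI)
  fix \<sigma> assume "\<sigma> \<in> {\<sigma> \<in> W. act \<sigma> j = act \<tau> j}"
  then have \<sigma>: "\<sigma> \<in> W" "act \<sigma> j = act \<tau> j" by auto
  have "act (inv \<tau> \<circ> \<sigma>) j = act (inv \<tau>) (act \<tau> j)"
    using act_comp[OF mem_permutes[OF inv_mem[OF assms(2)]] mem_permutes[OF \<sigma>(1)] assms(1)] \<sigma>(2)
    by simp
  then have "inv \<tau> \<circ> \<sigma> \<in> stabilizer W j"
    using act_inv_act[OF assms(2,1)] comp_mem[OF inv_mem[OF assms(2)] \<sigma>(1)]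
    unfolding stabilizer_def by simp
  moreover have "\<sigma> = \<tau> \<circ> (inv \<tau> \<circ> \<sigma>)" by (simp add: o_assoc comp_inv_cancel[OF assms(2)])
  ultimately show "\<sigma> \<in> (\<circ>) \<tau> ` stabilizer W j" by blast
next
  fix \<sigma> assume "\<sigma> \<in> (\<circ>) \<tau> ` stabilizer W j"
  then obtain \<rho> where \<rho>: "\<rho> \<in> W" "act \<rho> j = j" and \<sigma>: "\<sigma> = \<tau> \<circ> \<rho>"
    unfolding stabilizer_def by blast
  show "\<sigma> \<in> {\<sigma> \<in> W. act \<sigma> j = act \<tau> j}"
    using act_comp[OF mem_permutes[OF assms(2)] mem_permutes[OF \<rho>(1)] assms(1)] \<rho> assms(2)
    unfolding \<sigma> by (simp add: comp_mem)
qed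

lemma orbit_stabilizer:
  assumes "length j = d"
  shows "card (tuple_orbit W j) * card (stabilizer W j) = card W"
proof -
  have "card W = (\<Sum>k\<in>tuple_orbit W j. card {\<sigma> \<in> W. act \<sigma> j = k})"
    using sum.group[of W "tuple_orbit W j" "\<lambda>\<sigma>. act \<sigma> j" "\<lambda>_. 1::nat"]
      finite_group finite_tuple_orbit by (simp add: tuple_orbit_def)
  also have "\<dots> = (\<Sum>k\<in>tuple_orbit W j. card (stabilizer W j))"
  proof (rule sum.cong[OF refl])
    fix k assume "k \<in> tuple_orbit W j"
    then obtain \<tau> where \<tau>: "\<tau> \<in> W" "k = act \<tau> j" unfolding tuple_orbit_def by blast
    have "inj_on ((\<circ>) \<tau>) (stabilizer W j)"
      by (rule inj_on_subset[OF bij_betw_imp_inj_on[OF bij_betw_comp_left[OF \<tau>(1)]] stabilizer_subset])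
    then show "card {\<sigma> \<in> W. act \<sigma> j = k} = card (stabilizer W j)"
      unfolding \<tau>(2) act_fibre_eq_coset[OF assms \<tau>(1)] by (rule card_image)
  qed
  finally show ?thesis by simp
qed

lemma card_stabilizer_act:
  assumes "length j = d" "\<tau> \<in> W"
  shows "card (stabilizer W (act \<tau> j)) = card (stabilizer W j)"
proof -
  have "card (tuple_orbit W j) \<noteq> 0"
    using finite_tuple_orbit self_mem_tuple_orbit by (metis card_0_eq empty_iff)
  then show ?thesis
    using orbit_stabilizer[OF assms(1)] orbit_stabilizer[of "act \<tau> j"] tuple_orbit_act[OF assms]
      assms(1) by (metis length_act mult_left_cancel)
qed

lemma orbit_least_exists:
  assumes "length j = d"
  obtains r where "r \<in> tuple_orbit W j" "orbit_least W r"
proof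
  let ?r = "Min (tuple_orbit W j)"
  show r: "?r \<in> tuple_orbit W j"
    using Min_in[OF finite_tuple_orbit] self_mem_tuple_orbit by blast
  have "?r \<le> act \<sigma> ?r" if "\<sigma> \<in> W" for \<sigma>
  proof -
    have "act \<sigma> ?r \<in> tuple_orbit W j"
      using act_mem_tuple_orbit[OF that] tuple_orbit_eq[OF assms r] by blast
    then show ?thesis using Min_le[OF finite_tuple_orbit] by blast
  qed
  then show "orbit_least W ?r" unfolding orbit_least_def by blast
qed

lemma orbit_least_unique:
  assumes "length r = d" "orbit_least W r" "orbit_least W r'" "r' \<in> tuple_orbit W r"
  shows "r' = r"
proof (rule antisym)
  show "r \<le> r'" using assms(2,4) unfolding orbit_least_def tuple_orbit_def by blast
  have "r \<in> tuple_orbit W r'"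
    using tuple_orbit_eq[OF assms(1,4)] self_mem_tuple_orbit by blast
  then show "r' \<le> r" using assms(3) unfolding orbit_least_def tuple_orbit_def by blast
qed

lemma sum_over_orbits:
  fixes f :: "nat list \<Rightarrow> 'a::semiring_1"
  assumes "finite T" and T_length: "\<And>j. j \<in> T \<Longrightarrow> length j = d"
    and T_closed: "\<And>\<sigma> j. \<sigma> \<in> W \<Longrightarrow> j \<in> T \<Longrightarrow> act \<sigma> j \<in> T"
    and f_act: "\<And>\<sigma> j. \<sigma> \<in> W \<Longrightarrow> j \<in> T \<Longrightarrow> f (act \<sigma> j) = f j"
  shows "(\<Sum>j\<in>T. f j) = (\<Sum>r\<in>{r \<in> T. orbit_least W r}. of_nat (card (tuple_orbit W r)) * f r)"
proof -
  let ?R = "{r \<in> T. orbit_least W r}"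
  have orbit_subset: "tuple_orbit W r \<subseteq> T" if "r \<in> T" for r
    using T_closed that unfolding tuple_orbit_def by blast
  have "T \<subseteq> (\<Union>r\<in>?R. tuple_orbit W r)"
  proof
    fix j assume j: "j \<in> T"
    obtain r where r: "r \<in> tuple_orbit W j" "orbit_least W r"
      using orbit_least_exists[OF T_length[OF j]] .
    then have "j \<in> tuple_orbit W r"
      using tuple_orbit_eq[OF T_length[OF j]] self_mem_tuple_orbit by blast
    then show "j \<in> (\<Union>r\<in>?R. tuple_orbit W r)" using r orbit_subset[OF j] by blast
  qed
  then have T_eq: "T = (\<Union>r\<in>?R. tuple_orbit W r)" using orbit_subset by blast
  have disjoint: "tuple_orbit W r \<inter> tuple_orbit W r' = {}" if "r \<in> ?R" "r' \<in> ?R" "r \<noteq> r'" for r r'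
  proof (rule ccontr)
    assume "tuple_orbit W r \<inter> tuple_orbit W r' \<noteq> {}"
    then obtain k where "k \<in> tuple_orbit W r" "k \<in> tuple_orbit W r'" by blast
    then have "r' \<in> tuple_orbit W r"
      using tuple_orbit_eq T_length that(1,2) self_mem_tuple_orbit by (metis (no_types, lifting) mem_Collect_eq)
    then show False using orbit_least_unique T_length that by blast
  qed
  have "(\<Sum>j\<in>T. f j) = (\<Sum>j\<in>(\<Union>r\<in>?R. tuple_orbit W r). f j)"
    by (rule arg_cong[OF T_eq])
  also have "\<dots> = (\<Sum>r\<in>?R. \<Sum>j\<in>tuple_orbit W r. f j)"
    by (rule sum.UNION_disjoint) (use assms(1) finite_tuple_orbit disjoint in auto)
  also have "\<dots> = (\<Sum>r\<in>?R. of_nat (card (tuple_orbit W r)) * f r)"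
  proof (rule sum.cong[OF refl])
    fix r assume "r \<in> ?R"
    then have "f k = f r" if "k \<in> tuple_orbit W r" for k
      using that f_act unfolding tuple_orbit_def by blast
    then show "(\<Sum>j\<in>tuple_orbit W r. f j) = of_nat (card (tuple_orbit W r)) * f r" by simp
  qed
  finally show ?thesis .
qed

lemma sum_fixed_tuples_swap:
  fixes \<chi> :: "(nat \<Rightarrow> nat) \<Rightarrow> 'a::comm_semiring_0" and f :: "nat list \<Rightarrow> 'a"
  assumes "finite T"
  shows "(\<Sum>\<sigma>\<in>W. \<chi> \<sigma> * (\<Sum>j\<in>{j \<in> T. act \<sigma> j = j}. f j)) =
    (\<Sum>j\<in>T. (\<Sum>\<sigma>\<in>stabilizer W j. \<chi> \<sigma>) * f j)"
proof -
  have "(\<Sum>\<sigma>\<in>W. \<chi> \<sigma> * (\<Sum>j\<in>{j \<in> T. act \<sigma> j = j}. f j)) =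
      (\<Sum>\<sigma>\<in>W. \<Sum>j\<in>T. if act \<sigma> j = j then \<chi> \<sigma> * f j else 0)"
    by (simp add: sum.inter_filter[OF assms] sum_distrib_left if_distrib cong: if_cong)
  also have "\<dots> = (\<Sum>j\<in>T. \<Sum>\<sigma>\<in>W. if act \<sigma> j = j then \<chi> \<sigma> * f j else 0)"
    by (rule sum.swap)
  also have "\<dots> = (\<Sum>j\<in>T. (\<Sum>\<sigma>\<in>stabilizer W j. \<chi> \<sigma>) * f j)"
    unfolding stabilizer_def sum_distrib_right by (simp add: sum.inter_filter[OF finite_group])
  finally show ?thesis .
qed

lemma sum_char_fixed_tuples:
  fixes \<chi> :: "(nat \<Rightarrow> nat) \<Rightarrow> 'a::field" and f :: "nat list \<Rightarrow> 'a"
  assumes \<chi>: "one_dim_char W \<chi>"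
    and f_act: "\<And>\<sigma> j. \<sigma> \<in> W \<Longrightarrow> j \<in> tuples n d \<Longrightarrow> f (act \<sigma> j) = f j"
  shows "(\<Sum>\<sigma>\<in>W. \<chi> \<sigma> * (\<Sum>j\<in>{j \<in> tuples n d. act \<sigma> j = j}. f j)) =
    of_nat (card W) * (\<Sum>j\<in>J_set n d W \<chi>. f j)"
proof -
  define trivial where "trivial j \<longleftrightarrow> (\<forall>\<sigma>\<in>stabilizer W j. \<chi> \<sigma> = 1)" for j
  define h where "h j = (if trivial j then of_nat (card (stabilizer W j)) * f j else 0)" for j
  let ?R = "{r \<in> tuples n d. orbit_least W r}"
  have "(\<Sum>\<sigma>\<in>W. \<chi> \<sigma> * (\<Sum>j\<in>{j \<in> tuples n d. act \<sigma> j = j}. f j)) = (\<Sum>j\<in>tuples n d. h j)"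
    unfolding sum_fixed_tuples_swap[OF finite_tuples] using sum_char_stabilizer[OF \<chi> tuples_length]
    by (intro sum.cong refl) (simp add: h_def trivial_def)
  also have "\<dots> = (\<Sum>r\<in>?R. of_nat (card (tuple_orbit W r)) * h r)"
  proof (rule sum_over_orbits)
    fix \<sigma> j assume \<sigma>: "\<sigma> \<in> W" and j: "j \<in> tuples n d"
    show "act \<sigma> j \<in> tuples n d" by (rule act_in_tuples[OF mem_permutes[OF \<sigma>] j])
    show "h (act \<sigma> j) = h j"
      using char_trivial_on_stabilizer_act[OF \<chi> \<sigma> tuples_length[OF j]]
        card_stabilizer_act[OF tuples_length[OF j] \<sigma>] f_act[OF \<sigma> j]
      unfolding h_def trivial_def by simp
  qed (simp_all add: finite_tuples tuples_length)
  also have "\<dots> = (\<Sum>r\<in>?R. if trivial r then of_nat (card W) * f r else 0)"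
  proof (rule sum.cong[OF refl])
    fix r assume "r \<in> ?R"
    then have "card (tuple_orbit W r) * card (stabilizer W r) = card W"
      using orbit_stabilizer tuples_length by blast
    then show "of_nat (card (tuple_orbit W r)) * h r = (if trivial r then of_nat (card W) * f r else 0)"
      unfolding h_def by (simp add: mult.assoc[symmetric] flip: of_nat_mult)
  qed
  also have "\<dots> = of_nat (card W) * (\<Sum>j\<in>J_set n d W \<chi>. f j)"
  proof -
    have J_eq: "J_set n d W \<chi> = {r \<in> ?R. trivial r}"
      unfolding J_set_eq trivial_def by auto
    have finite: "finite ?R" using finite_tuples by simp
    show ?thesis
      unfolding J_eq sum.inter_filter[OF finite] sum_distrib_left by (intro sum.cong) simp_all
  qed
  finally show ?thesis .
qed

end

theorem corollary2p1p4:
  fixes W :: "(nat \<Rightarrow> nat) set" and \<chi> :: "(nat \<Rightarrow> nat) \<Rightarrow> 'a::field_char_0"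
    and n d :: nat and x :: "nat \<Rightarrow> 'a"
  assumes "perm_group d W" and "one_dim_char W \<chi>"
  shows "g_poly n d W \<chi> x = Z_poly d W \<chi> (\<lambda>s. \<Sum>i\<le>n. x i ^ s)"
proof -
  interpret permutation_group d W by unfold_locales (rule assms(1))
  let ?m = "\<lambda>j. \<Prod>k<d. x (j ! k)"
  have cycle_index: "(\<Prod>s\<in>{1..d}. (\<Sum>i\<le>n. x i ^ s) ^ cycle_count d \<sigma> s) =
      (\<Sum>j\<in>{j \<in> tuples n d. act \<sigma> j = j}. ?m j)" if "\<sigma> \<in> W" for \<sigma>
    by (rule prod_power_sums_cycle_count[OF mem_permutes[OF that]])
  have "Z_poly d W \<chi> (\<lambda>s. \<Sum>i\<le>n. x i ^ s) =
      1 / of_nat (card W) * (\<Sum>\<sigma>\<in>W. \<chi> \<sigma> * (\<Sum>j\<in>{j \<in> tuples n d. act \<sigma> j = j}. ?m j))"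
    unfolding Z_poly_def by (simp only: cycle_index cong: sum.cong)
  also have "\<dots> = 1 / of_nat (card W) * (of_nat (card W) * g_poly n d W \<chi> x)"
    unfolding g_poly_def
    by (subst sum_char_fixed_tuples[OF assms(2)]) (auto intro: prod_nth_act mem_permutes tuples_length)
  also have "\<dots> = g_poly n d W \<chi> x" using card_group_pos by simp
  finally show ?thesis ..
qed

end
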